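(* Let $G$ be a compact abelian group with discrete dual group $\Gamma$ and $N \in \mathbb{N}$. Every $N$-PR set $E \subset \Gamma$ is weak $\varepsilon$-Kronecker for $\varepsilon = |1 - e^{\pi i/N}|$.
   Context: $\mathbb{T}$ is the unit circle and $\mathbb{Z}_N$ is identified with the $N$-th roots of unity in $\mathbb{T}$. A subset $E \subset \Gamma$ is $N$-PR if for every function $\varphi: E \to \mathbb{Z}_N$ there exists $x \in G$ with $\varphi(\gamma) = \gamma(x)$ for all $\gamma \in E$. For $\varepsilon > 0$, $E$ is weak $\varepsilon$-Kronecker if for every function $\varphi: E \to \mathbb{T}$ there exists $x \in G$ with $|\varphi(\gamma) - \gamma(x)| \le \varepsilon$ for all $\gamma \in E$. *)

theory Defs
  imports "HOL-Analysis.Analysis"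
begin

text \<open>A compact abelian group G is modelled as a type 'g of class
  topological_ab_group_add (written additively) which is Hausdorff and compact.\<close>

definition character :: "('g::topological_ab_group_add \<Rightarrow> complex) \<Rightarrow> bool" where
  "character \<gamma> \<longleftrightarrow> continuous_on UNIV \<gamma> \<and> (\<forall>x. cmod (\<gamma> x) = 1)
     \<and> (\<forall>x y. \<gamma> (x + y) = \<gamma> x * \<gamma> y)"

definition dual_group :: "('g::topological_ab_group_add \<Rightarrow> complex) set" where
  "dual_group = {\<gamma>. character \<gamma>}"

text \<open>The unit circle T, and Z_N identified with the N-th roots of unity.\<close>
definition circle :: "complex set" where
  "circle = {z. cmod z = 1}"

definition roots_of_unity :: "nat \<Rightarrow> complex set" where
  "roots_of_unity N = {z. z ^ N = 1}"

definition N_PR :: "nat \<Rightarrow> ('g::topological_ab_group_add \<Rightarrow> complex) set \<Rightarrow> bool" where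
  "N_PR N E \<longleftrightarrow> (\<forall>\<phi> \<in> E \<rightarrow> roots_of_unity N. \<exists>x. \<forall>\<gamma>\<in>E. \<phi> \<gamma> = \<gamma> x)"

definition weak_Kronecker :: "real \<Rightarrow> ('g::topological_ab_group_add \<Rightarrow> complex) set \<Rightarrow> bool" where
  "weak_Kronecker \<epsilon> E \<longleftrightarrow> (\<forall>\<phi> \<in> E \<rightarrow> circle. \<exists>x. \<forall>\<gamma>\<in>E. cmod (\<phi> \<gamma> - \<gamma> x) \<le> \<epsilon>)"

end

theory Submission
  imports Defs
begin

text \<open>Round each prescribed value \<open>\<phi> \<gamma>\<close> on the circle to a nearest \<open>N\<close>-th root of
  unity. Its argument then lies within \<open>\<pi>/N\<close> of a multiple of \<open>2\<pi>/N\<close>, so the rounding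
  moves it by at most the chord \<open>|1 - exp (\<pi> i / N)|\<close>. By the \<open>N\<close>-PR property a single \<open>x\<close>
  interpolates the rounded values exactly, and hence approximates \<open>\<phi>\<close> within that chord.\<close>

lemma norm_cis_minus_one: "cmod (cis s - 1) = sqrt (2 - 2 * cos s)"
proof -
  have "cmod (cis s - 1) = sqrt ((cos s - 1)\<^sup>2 + (sin s)\<^sup>2)"
    by (simp add: cmod_def)
  also have "(cos s - 1)\<^sup>2 + (sin s)\<^sup>2 = 2 - 2 * cos s"
    using sin_cos_squared_add[of s] by (simp add: power2_eq_square algebra_simps)
  finally show ?thesis .
qed

lemma norm_cis_minus_one_mono:
  assumes "\<bar>s\<bar> \<le> t" and "t \<le> pi"
  shows "cmod (cis s - 1) \<le> cmod (cis t - 1)"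
proof -
  have "cos t \<le> cos \<bar>s\<bar>"
    using assms by (intro cos_monotone_0_pi_le) auto
  also have "cos \<bar>s\<bar> = cos s"
    by (cases "s \<ge> 0") auto
  finally show ?thesis
    by (simp add: norm_cis_minus_one)
qed

lemma exists_int_multiple_near:
  fixes a t :: real
  assumes "a > 0"
  shows "\<exists>k::int. \<bar>t - of_int k * a\<bar> \<le> a / 2"
proof
  let ?k = "round (t / a)"
  have "\<bar>t - of_int ?k * a\<bar> = \<bar>of_int ?k - t / a\<bar> * a"
    using assms by (simp add: abs_mult_pos' field_simps abs_minus_commute)
  also have "\<dots> \<le> 1/2 * a"
    using assms of_int_round_abs_le[of "t / a"] by (intro mult_right_mono) auto
  finally show "\<bar>t - of_int ?k * a\<bar> \<le> a / 2"
    by simp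
qed

lemma unit_circle_near_root_of_unity:
  fixes z :: complex
  assumes "cmod z = 1" and "N \<ge> 1"
  shows "\<exists>w. w ^ N = 1 \<and> cmod (z - w) \<le> cmod (1 - exp (pi * \<i> / of_nat N))"
proof -
  have N_pos: "real N > 0"
    using assms(2) by simp
  obtain k :: int where k: "\<bar>Arg z - of_int k * (2 * pi / N)\<bar> \<le> pi / N"
    using exists_int_multiple_near[of "2 * pi / N" "Arg z"] N_pos by auto
  define w where "w = cis (of_int k * (2 * pi / N))"
  define s where "s = Arg z - of_int k * (2 * pi / N)"
  have "w ^ N = cis (real N * (of_int k * (2 * pi / N)))"
    unfolding w_def by (rule Complex.DeMoivre)
  also have "real N * (of_int k * (2 * pi / N)) = 2 * pi * of_int k"
    using N_pos by simp
  finally have w_root: "w ^ N = 1"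
    by simp
  have "z = cis (Arg z)"
    using rcis_cmod_Arg[of z] assms(1) by (simp add: rcis_def)
  then have "z - w = w * (cis s - 1)"
    by (simp add: w_def s_def cis_mult algebra_simps)
  then have "cmod (z - w) = cmod (cis s - 1)"
    by (simp add: norm_mult w_def)
  also have "\<dots> \<le> cmod (cis (pi / N) - 1)"
    using k assms(2) by (intro norm_cis_minus_one_mono) (auto simp: s_def divide_le_eq)
  also have "\<dots> = cmod (1 - exp (pi * \<i> / of_nat N))"
    by (simp add: cis_conv_exp norm_minus_commute mult.commute)
  finally show ?thesis
    using w_root by blast
qed

theorem proposition2p7:
  fixes E :: "('g::{topological_ab_group_add, t2_space} \<Rightarrow> complex) set"
    and N :: nat
  assumes "compact (UNIV :: 'g set)"
    and "N \<ge> 1"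
    and "E \<subseteq> dual_group"
    and "N_PR N E"
  shows "weak_Kronecker (cmod (1 - exp (pi * \<i> / of_nat N))) E"
  unfolding weak_Kronecker_def
proof
  let ?\<epsilon> = "cmod (1 - exp (pi * \<i> / of_nat N))"
  fix \<phi> assume "\<phi> \<in> E \<rightarrow> circle"
  then have "\<forall>\<gamma>\<in>E. \<exists>w. w ^ N = 1 \<and> cmod (\<phi> \<gamma> - w) \<le> ?\<epsilon>"
    using unit_circle_near_root_of_unity assms(2) by (auto simp: circle_def)
  then obtain \<psi> where \<psi>: "\<forall>\<gamma>\<in>E. \<psi> \<gamma> ^ N = 1 \<and> cmod (\<phi> \<gamma> - \<psi> \<gamma>) \<le> ?\<epsilon>"
    by metis
  then have "\<psi> \<in> E \<rightarrow> roots_of_unity N"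
    by (auto simp: roots_of_unity_def)
  then obtain x where "\<forall>\<gamma>\<in>E. \<psi> \<gamma> = \<gamma> x"
    using assms(4) unfolding N_PR_def by blast
  with \<psi> show "\<exists>x. \<forall>\<gamma>\<in>E. cmod (\<phi> \<gamma> - \<gamma> x) \<le> ?\<epsilon>"
    by metis
qed

end
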